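(* Let $\ell$ be a prime, and let $n, d \ge 1$. Let $G \le G_n$ be a subgroup with $\dim(G_n/G) < \frac{n}{d}$. Then there exists an index $1 \le i \le n$ that is $d$-degenerate under $G$.
   Context: $G_n\cong(\mathbb{Z}/\ell)^n = \mathbb{F}_\ell^n$, with elements written $g=(g_1,\dots,g_n)$ and the group written multiplicatively. $\dim(G_n/G)$ denotes the dimension of $G_n/G$ as an $\mathbb{F}_\ell$-vector space. For a multi-index $\vec{i}=(1\le i_1<\dots<i_{d'}\le n)$, set $G_{\vec{i}}=\{g\in G_n \mid g_{i_1}\cdots g_{i_{d'}}=1\}$. An index $i$ is $d$-degenerate under $G\le G_n$ if $G$ is not contained in $G_{\vec{i}}$ for any $d'\le d$ and any multi-index $\vec{i}$ of length $d'$ containing $i$. *)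

theory Defs
  imports Complex_Main "HOL-Computational_Algebra.Primes"
begin

text \<open>G_n = (Z/l)^n, elements g = (g_1,...,g_n) represented as functions
  nat => int with g j in {0..<l} for 1 <= j <= n and g j = 0 otherwise.
  The group operation (written multiplicatively in the paper) is
  componentwise addition mod l; the identity is the zero function.\<close>

definition Gn :: "int \<Rightarrow> nat \<Rightarrow> (nat \<Rightarrow> int) set" where
  "Gn l n = {g. (\<forall>j\<in>{1..n}. 0 \<le> g j \<and> g j < l) \<and> (\<forall>j. j \<notin> {1..n} \<longrightarrow> g j = 0)}"

definition gmult :: "int \<Rightarrow> (nat \<Rightarrow> int) \<Rightarrow> (nat \<Rightarrow> int) \<Rightarrow> (nat \<Rightarrow> int)" where
  "gmult l g h = (\<lambda>j. (g j + h j) mod l)"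

definition ginv :: "int \<Rightarrow> (nat \<Rightarrow> int) \<Rightarrow> (nat \<Rightarrow> int)" where
  "ginv l g = (\<lambda>j. (- g j) mod l)"

definition is_subgroup :: "int \<Rightarrow> nat \<Rightarrow> (nat \<Rightarrow> int) set \<Rightarrow> bool" where
  "is_subgroup l n G \<longleftrightarrow> G \<subseteq> Gn l n \<and> (\<lambda>_. 0) \<in> G \<and>
     (\<forall>g\<in>G. \<forall>h\<in>G. gmult l g h \<in> G) \<and> (\<forall>g\<in>G. ginv l g \<in> G)"

text \<open>dim(G_n/G) as an F_l-vector space: the k with |G_n/G| = l^k,
  i.e. l^k * |G| = l^n.\<close>
definition quot_dim :: "int \<Rightarrow> nat \<Rightarrow> (nat \<Rightarrow> int) set \<Rightarrow> nat" where
  "quot_dim l n G = (THE k. l ^ k * int (card G) = l ^ n)"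

text \<open>G_I for a multi-index I (a set of indices in {1..n}):
  elements with g_{i_1} ... g_{i_d'} = 1, i.e. the coordinate sum is 0 mod l.\<close>
definition G_idx :: "int \<Rightarrow> nat \<Rightarrow> nat set \<Rightarrow> (nat \<Rightarrow> int) set" where
  "G_idx l n I = {g \<in> Gn l n. (\<Sum>j\<in>I. g j) mod l = 0}"

definition degenerate :: "int \<Rightarrow> nat \<Rightarrow> nat \<Rightarrow> (nat \<Rightarrow> int) set \<Rightarrow> nat \<Rightarrow> bool" where
  "degenerate l n d G i \<longleftrightarrow>
     (\<forall>I. I \<subseteq> {1..n} \<and> i \<in> I \<and> card I \<le> d \<longrightarrow> \<not> G \<subseteq> G_idx l n I)"

end

theory Submission
  imports Defs "HOL-Algebra.Coset" "HOL-Library.FuncSet"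
begin

text \<open>Suppose no index is \<open>d\<close>-degenerate, so every index \<open>i\<close> lies in a
  multi-index \<open>I\<close> of length at most \<open>d\<close> with \<open>G \<subseteq> G\<^sub>I\<close>. Choosing \<open>i\<close>,
  discarding \<open>I\<close> and repeating produces a set \<open>T\<close> of at least \<open>n/d\<close> indices
  such that an element of \<open>G\<close> vanishing outside \<open>T\<close> vanishes everywhere: the
  relation chosen for \<open>i\<close> involves no index chosen later, so it forces the
  coordinate at \<open>i\<close> to vanish, and so on.
  Hence restriction to the coordinates outside \<open>T\<close> is injective on \<open>G\<close>, which
  gives \<open>|G| \<le> \<ell>\<^bsup>n - |T|\<^esup>\<close>, i.e. \<open>dim(G\<^sub>n/G) \<ge> |T| \<ge> n/d\<close>.\<close>

lemma Gn_coord_mod: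
  assumes "l > 0" "g \<in> Gn l n"
  shows "g j mod l = g j"
  using assms by (cases "j \<in> {1..n}") (auto simp: Gn_def)

lemma gmult_in_Gn:
  assumes "l > 0" "g \<in> Gn l n" "h \<in> Gn l n"
  shows "gmult l g h \<in> Gn l n"
  using assms by (auto simp: Gn_def gmult_def)

lemma ginv_in_Gn:
  assumes "l > 0" "g \<in> Gn l n"
  shows "ginv l g \<in> Gn l n"
  using assms by (auto simp: Gn_def ginv_def)

lemma card_Gn:
  assumes "l > 0"
  shows "card (Gn l n) = nat l ^ n"
proof -
  have "bij_betw (\<lambda>g. restrict g {1..n}) (Gn l n) (PiE {1..n} (\<lambda>_. {0..<l}))"
  proof (rule bij_betw_byWitness[where f' = "\<lambda>f j. if j \<in> {1..n} then f j else 0"])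
    show "\<forall>g\<in>Gn l n. (\<lambda>j. if j \<in> {1..n} then restrict g {1..n} j else 0) = g"
      by (auto simp: Gn_def fun_eq_iff)
    show "\<forall>f\<in>PiE {1..n} (\<lambda>_. {0..<l}). restrict (\<lambda>j. if j \<in> {1..n} then f j else 0) {1..n} = f"
      by (auto simp: fun_eq_iff PiE_def extensional_def)
    show "(\<lambda>g. restrict g {1..n}) ` Gn l n \<subseteq> PiE {1..n} (\<lambda>_. {0..<l})"
      by (auto simp: Gn_def)
    show "(\<lambda>f j. if j \<in> {1..n} then f j else 0) ` PiE {1..n} (\<lambda>_. {0..<l}) \<subseteq> Gn l n"
      by (auto simp: Gn_def PiE_def Pi_def)
  qed
  then have "card (Gn l n) = card (PiE {1..n} (\<lambda>_. {0..<l::int}))"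
    by (rule bij_betw_same_card)
  also have "\<dots> = nat l ^ n"
    by (simp add: card_PiE)
  finally show ?thesis .
qed

definition Gn_group :: "int \<Rightarrow> nat \<Rightarrow> (nat \<Rightarrow> int) monoid" where
  "Gn_group l n = \<lparr>carrier = Gn l n, mult = gmult l, one = (\<lambda>_. 0)\<rparr>"

lemma group_Gn_group:
  assumes "l > 0"
  shows "group (Gn_group l n)"
proof (rule groupI)
  fix x y z
  assume x: "x \<in> carrier (Gn_group l n)"
  then show "\<exists>y\<in>carrier (Gn_group l n). y \<otimes>\<^bsub>Gn_group l n\<^esub> x = \<one>\<^bsub>Gn_group l n\<^esub>"
    using ginv_in_Gn[OF assms]
    by (intro bexI[of _ "ginv l x"]) (auto simp: Gn_group_def gmult_def ginv_def mod_add_left_eq)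
  show "\<one>\<^bsub>Gn_group l n\<^esub> \<otimes>\<^bsub>Gn_group l n\<^esub> x = x"
    using x Gn_coord_mod[OF assms] by (simp add: Gn_group_def gmult_def)
  assume "y \<in> carrier (Gn_group l n)"
  with x show "x \<otimes>\<^bsub>Gn_group l n\<^esub> y \<in> carrier (Gn_group l n)"
    using gmult_in_Gn[OF assms] by (simp add: Gn_group_def)
  show "x \<otimes>\<^bsub>Gn_group l n\<^esub> y \<otimes>\<^bsub>Gn_group l n\<^esub> z
      = x \<otimes>\<^bsub>Gn_group l n\<^esub> (y \<otimes>\<^bsub>Gn_group l n\<^esub> z)"
    by (simp add: Gn_group_def gmult_def mod_add_left_eq mod_add_right_eq add.assoc)
next
  show "\<one>\<^bsub>Gn_group l n\<^esub> \<in> carrier (Gn_group l n)"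
    using assms by (simp add: Gn_group_def Gn_def)
qed

lemma Gn_group_inv:
  assumes "l > 0" "g \<in> Gn l n"
  shows "inv\<^bsub>Gn_group l n\<^esub> g = ginv l g"
  using group.inv_equality[OF group_Gn_group[OF assms(1)], where y = "ginv l g" and x = g] assms ginv_in_Gn[OF assms]
  by (auto simp: Gn_group_def gmult_def ginv_def mod_add_left_eq)

lemma subgroup_Gn_group:
  assumes "l > 0" "is_subgroup l n G"
  shows "subgroup G (Gn_group l n)"
proof (rule group.subgroupI[OF group_Gn_group[OF assms(1)]])
  show "G \<subseteq> carrier (Gn_group l n)" "G \<noteq> {}"
    using assms(2) by (auto simp: Gn_group_def is_subgroup_def)
  show "\<And>a. a \<in> G \<Longrightarrow> inv\<^bsub>Gn_group l n\<^esub> a \<in> G"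
    using assms Gn_group_inv by (auto simp: is_subgroup_def)
  show "\<And>a b. a \<in> G \<Longrightarrow> b \<in> G \<Longrightarrow> a \<otimes>\<^bsub>Gn_group l n\<^esub> b \<in> G"
    using assms(2) by (auto simp: is_subgroup_def Gn_group_def)
qed

lemma card_subgroup_eq_prime_power:
  assumes "prime l" "is_subgroup l n G"
  shows "\<exists>j\<le>n. card G = nat l ^ j"
proof -
  have l0: "l > 0"
    using assms(1) prime_gt_0_int by blast
  have "card (rcosets\<^bsub>Gn_group l n\<^esub> G) * card G = order (Gn_group l n)"
    by (rule group.lagrange[OF group_Gn_group[OF l0] subgroup_Gn_group[OF l0 assms(2)]])
  also have "\<dots> = nat l ^ n"
    using card_Gn[OF l0] by (simp add: order_def Gn_group_def)
  finally have "card G dvd nat l ^ n"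
    by (metis dvd_triv_right)
  moreover have "prime (nat l)"
    using assms(1) by simp
  ultimately show ?thesis
    using divides_primepow_nat by blast
qed

lemma quot_dim_eq:
  assumes "l > 1" "j \<le> n" "card G = nat l ^ j"
  shows "quot_dim l n G = n - j"
  unfolding quot_dim_def
proof (rule the_equality)
  have "l ^ (n - j) * l ^ j = l ^ n"
    using assms(2) by (simp flip: power_add)
  then show "l ^ (n - j) * int (card G) = l ^ n"
    using assms by simp
next
  fix k
  assume "l ^ k * int (card G) = l ^ n"
  then have "l ^ (k + j) = l ^ n"
    using assms by (simp add: power_add)
  then show "k = n - j"
    using assms(1) by (simp add: power_inject_exp)
qed

definition meets_support_trivially :: "nat \<Rightarrow> (nat \<Rightarrow> int) set \<Rightarrow> nat set \<Rightarrow> bool" where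
  "meets_support_trivially n G T \<longleftrightarrow> (\<forall>g\<in>G. (\<forall>j\<in>{1..n} - T. g j = 0) \<longrightarrow> (\<forall>j\<in>T. g j = 0))"

lemma inj_on_restrict_complement:
  assumes "l > 0" "is_subgroup l n G" "meets_support_trivially n G T"
  shows "inj_on (\<lambda>g. restrict g ({1..n} - T)) G"
proof (rule inj_onI)
  fix g h
  assume g: "g \<in> G" and h: "h \<in> G"
    and eq: "restrict g ({1..n} - T) = restrict h ({1..n} - T)"
  have gGn: "g \<in> Gn l n" and hGn: "h \<in> Gn l n"
    using g h assms(2) by (auto simp: is_subgroup_def)
  define x where "x = gmult l g (ginv l h)"
  have "x \<in> G"
    using assms(2) g h by (simp add: is_subgroup_def x_def)
  have x_coord: "x j = (g j - h j) mod l" for j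
    by (simp add: x_def gmult_def ginv_def mod_add_right_eq)
  have "\<forall>j\<in>{1..n} - T. x j = 0"
    using eq x_coord by (metis restrict_apply' diff_self mod_0)
  then have x_T: "\<forall>j\<in>T. x j = 0"
    using assms(3) \<open>x \<in> G\<close> by (simp add: meets_support_trivially_def)
  show "g = h"
  proof
    fix j
    consider "j \<notin> {1..n}" | "j \<in> {1..n} - T" | "j \<in> T"
      by blast
    then show "g j = h j"
    proof cases
      case 1
      then show ?thesis
        using gGn hGn by (simp add: Gn_def)
    next
      case 2
      then show ?thesis
        using eq by (metis restrict_apply')
    next
      case 3
      then have "g j mod l = h j mod l"
        using x_T x_coord by (simp add: mod_eq_dvd_iff mod_eq_0_iff_dvd)
      then show ?thesis
        using Gn_coord_mod[OF assms(1) gGn] Gn_coord_mod[OF assms(1) hGn] by simp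
    qed
  qed
qed

lemma card_le_if_meets_support_trivially:
  assumes "l > 0" "is_subgroup l n G" "meets_support_trivially n G T" "T \<subseteq> {1..n}"
  shows "card G \<le> nat l ^ (n - card T)"
proof -
  have "G \<subseteq> Gn l n"
    using assms(2) by (simp add: is_subgroup_def)
  then have "(\<lambda>g. restrict g ({1..n} - T)) ` G \<subseteq> PiE ({1..n} - T) (\<lambda>_. {0..<l})"
    by (force simp: Gn_def)
  then have "card G \<le> card (PiE ({1..n} - T) (\<lambda>_. {0..<l}))"
    by (intro card_inj_on_le[OF inj_on_restrict_complement[OF assms(1-3)]] finite_PiE) auto
  also have "\<dots> = nat l ^ card ({1..n} - T)"
    by (simp add: card_PiE)
  also have "card ({1..n} - T) = n - card T"
    using assms(4) by (simp add: card_Diff_subset finite_subset)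
  finally show ?thesis .
qed

lemma card_le_quot_dim_if_meets_support_trivially:
  assumes "prime l" "is_subgroup l n G" "meets_support_trivially n G T" "T \<subseteq> {1..n}"
  shows "card T \<le> quot_dim l n G"
proof -
  have l1: "l > 1"
    using assms(1) prime_gt_1_int by blast
  obtain j where j: "j \<le> n" "card G = nat l ^ j"
    using card_subgroup_eq_prime_power[OF assms(1,2)] by blast
  have "nat l ^ j \<le> nat l ^ (n - card T)"
    using card_le_if_meets_support_trivially[OF _ assms(2-4)] l1 j(2) by simp
  then have "j \<le> n - card T"
    using l1 by (simp add: power_le_imp_le_exp)
  moreover have "card T \<le> n"
    using card_mono[OF finite_atLeastAtMost assms(4)] by simp
  ultimately show ?thesis
    using quot_dim_eq[OF l1 j] by linarith
qed

lemma large_support_met_trivially_if_none_degenerate: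
  assumes "l > 0" "is_subgroup l n G" "\<forall>i\<in>{1..n}. \<not> degenerate l n d G i" "U \<subseteq> {1..n}"
  shows "\<exists>T\<subseteq>U. card U \<le> d * card T \<and> meets_support_trivially n G T"
  using assms(4)
proof (induction "card U" arbitrary: U rule: less_induct)
  case less
  show ?case
  proof (cases "U = {}")
    case True
    then show ?thesis
      by (auto simp: meets_support_trivially_def)
  next
    case False
    then obtain i where "i \<in> U"
      by blast
    with less.prems have "\<not> degenerate l n d G i"
      using assms(3) by blast
    then obtain I where I: "I \<subseteq> {1..n}" "i \<in> I" "card I \<le> d" "G \<subseteq> G_idx l n I"
      unfolding degenerate_def by blast
    have "finite U" "finite I"
      using less.prems I(1) finite_subset by auto
    then have "card (U - I) < card U"
      using \<open>i \<in> U\<close> I(2) by (intro psubset_card_mono) auto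
    with less.hyps less.prems obtain T
      where T: "T \<subseteq> U - I" "card (U - I) \<le> d * card T" "meets_support_trivially n G T"
      by (metis Diff_subset order_trans)
    have "finite T" "i \<notin> T"
      using T(1) \<open>finite U\<close> I(2) finite_subset by auto
    have "card U \<le> card (U - I) + card I"
      using \<open>finite U\<close> \<open>finite I\<close> card_Un_le[of "U - I" I] card_mono[of "(U - I) \<union> I" U] by auto
    also have "\<dots> \<le> d * card (insert i T)"
      using T(2) I(3) \<open>finite T\<close> \<open>i \<notin> T\<close> by simp
    finally have card_U: "card U \<le> d * card (insert i T)" .
    have "meets_support_trivially n G (insert i T)"
      unfolding meets_support_trivially_def
    proof (intro ballI impI)
      fix g j
      assume g: "g \<in> G" and off: "\<forall>j\<in>{1..n} - insert i T. g j = 0" and "j \<in> insert i T"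
      have "g \<in> Gn l n"
        using g assms(2) by (auto simp: is_subgroup_def)
      have "(\<Sum>j\<in>I. g j) = g i + (\<Sum>j\<in>I - {i}. g j)"
        using \<open>finite I\<close> I(2) by (simp add: sum.remove)
      also have "(\<Sum>j\<in>I - {i}. g j) = 0"
        using off T(1) I(1) by (intro sum.neutral) blast
      finally have "g i mod l = (\<Sum>j\<in>I. g j) mod l"
        by simp
      also have "\<dots> = 0"
        using g I(4) by (auto simp: G_idx_def)
      finally have "g i mod l = 0" .
      then have "g i = 0"
        using Gn_coord_mod[OF assms(1) \<open>g \<in> Gn l n\<close>] by simp
      with off have "\<forall>j\<in>{1..n} - T. g j = 0"
        by blast
      with g T(3) have "\<forall>j\<in>T. g j = 0"
        by (simp add: meets_support_trivially_def)
      with \<open>g i = 0\<close> \<open>j \<in> insert i T\<close> show "g j = 0"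
        by blast
    qed
    with card_U T(1) \<open>i \<in> U\<close> show ?thesis
      by (intro exI[of _ "insert i T"]) auto
  qed
qed

theorem lemma2p11:
  fixes l :: int and n d :: nat and G :: "(nat \<Rightarrow> int) set"
  assumes "prime l" and "n \<ge> 1" and "d \<ge> 1"
    and "is_subgroup l n G"
    and "real (quot_dim l n G) < real n / real d"
  shows "\<exists>i\<in>{1..n}. degenerate l n d G i"
proof (rule ccontr)
  assume "\<not> ?thesis"
  then have "\<forall>i\<in>{1..n}. \<not> degenerate l n d G i"
    by blast
  from large_support_met_trivially_if_none_degenerate
      [OF prime_gt_0_int[OF assms(1)] assms(4) this order_refl]
  obtain T where T: "T \<subseteq> {1..n}" "n \<le> d * card T" "meets_support_trivially n G T"
    by auto
  have "n \<le> d * quot_dim l n G"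
    using T(2) card_le_quot_dim_if_meets_support_trivially[OF assms(1,4) T(3,1)]
    by (meson le_trans mult_le_mono2)
  then have "real n \<le> real d * real (quot_dim l n G)"
    by (simp flip: of_nat_mult)
  moreover have "real d * real (quot_dim l n G) < real n"
    using assms(3,5) by (simp add: pos_less_divide_eq mult.commute)
  ultimately show False
    by linarith
qed

end
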